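(* Write $P_{a/b}(u,v,w)=\sum_{k\ge0}S_k(v,w)u^k$. Then: (1) for every integer $n\ge1$, for $P_{1/n}$ one has $S_1(v,w)=\sum_{k=1}^{n}k\,v^{k-1}w^{n-k}$; (2) for every integer $n\ge2$, for $P_{2/(2n-1)}$ one has $S_1(v,w)=2n\,v^{2n-1}+\sum_{k=1}^{n-1}4k\,v^{n+k-1}w^{n-k}$. Equivalently, in terms of the Markov polynomials, the coefficient polynomial $S_1(y^2,z^2)$ multiplies $x^{3-a}/(y^{b-1}z^{a+b-1})$ in the expansion of $M_{a/b}$ in powers of $x$.
   Context: Markov polynomials. Let $x,y,z$ be indeterminates. Consider the set consisting of all rationals $\rho\in[0,1]$, each written in lowest terms $\rho=a/b$ with integers $a\ge 0$, $b\ge 1$, together with the formal symbol $1/0$. Define Laurent polynomials $M_\rho(x,y,z)$ recursively by $M_{1/0}=y$, $M_{0/1}=x$, $M_{1/1}=\frac{x^2+y^2}{z}$, and: whenever $a/b$, $c/d$ are in this set with $|ad-bc|=1$ and $(a+2c)/(b+2d)\in[0,1]$, then $M_{\frac{a+2c}{b+2d}}=\big(M_{c/d}^2+M_{\frac{a+c}{b+d}}^2\big)/M_{a/b}$. This determines $M_\rho$ for every rational $\rho\in[0,1]$. Numerator. For coprime $1\le a\le b$, $P_{a/b}(u,v,w)$ denotes the homogeneous polynomial of degree $a+b-1$ such that $M_{a/b}(x,y,z)=P_{a/b}(x^2,y^2,z^2)/(x^{a-1}y^{b-1}z^{a+b-1})$; its existence is known. *)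

theory Defs
  imports "HOL-Computational_Algebra.Polynomial"
begin

text \<open>Index set: rationals a/b in [0,1] in lowest terms (b \<ge> 1), together with 1/0.
  A pair (a,b) of naturals represents a/b.\<close>
definition markov_idx :: "nat \<Rightarrow> nat \<Rightarrow> bool" where
  "markov_idx a b \<longleftrightarrow> coprime a b \<and> (a \<le> b \<or> b = 0)"

text \<open>A family of Markov polynomials, viewed as functions of positive reals x,y,z
  (a Laurent polynomial is determined by its values there).  M a b x y z = M_{a/b}(x,y,z).\<close>
definition is_markov_family :: "(nat \<Rightarrow> nat \<Rightarrow> real \<Rightarrow> real \<Rightarrow> real \<Rightarrow> real) \<Rightarrow> bool" where
  "is_markov_family M \<longleftrightarrow>
     (\<forall>x y z. x > 0 \<longrightarrow> y > 0 \<longrightarrow> z > 0 \<longrightarrow>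
        M 1 0 x y z = y \<and> M 0 1 x y z = x \<and> M 1 1 x y z = (x^2 + y^2) / z) \<and>
     (\<forall>a b c d. markov_idx a b \<longrightarrow> markov_idx c d \<longrightarrow>
        \<bar>int a * int d - int b * int c\<bar> = 1 \<longrightarrow>
        a + 2*c \<le> b + 2*d \<longrightarrow>
        (\<forall>x y z. x > 0 \<longrightarrow> y > 0 \<longrightarrow> z > 0 \<longrightarrow>
           M (a + 2*c) (b + 2*d) x y z =
             ((M c d x y z)^2 + (M (a + c) (b + d) x y z)^2) / M a b x y z))"

text \<open>Trivariate polynomials as nested univariate polynomials:
  outer variable u, middle variable v, inner variable w.\<close>
definition eval3 :: "real poly poly poly \<Rightarrow> real \<Rightarrow> real \<Rightarrow> real \<Rightarrow> real" where
  "eval3 P u v w = poly (map_poly (\<lambda>q. poly (map_poly (\<lambda>r. poly r w) q) v) P) u"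

definition is_numerator ::
  "(nat \<Rightarrow> nat \<Rightarrow> real \<Rightarrow> real \<Rightarrow> real \<Rightarrow> real) \<Rightarrow> nat \<Rightarrow> nat \<Rightarrow> real poly poly poly \<Rightarrow> bool" where
  "is_numerator M a b P \<longleftrightarrow>
     (\<forall>x y z. x > 0 \<longrightarrow> y > 0 \<longrightarrow> z > 0 \<longrightarrow>
        M a b x y z = eval3 P (x^2) (y^2) (z^2) / (x^(a-1) * y^(b-1) * z^(a+b-1)))"

end

theory Submission
  imports Defs
begin

text \<open>Taking \<open>a/b = 1/n\<close>, \<open>c/d = 0/1\<close> in the Markov recursion gives
  \<open>M\<^bsub>1/(n+2)\<^esub> M\<^bsub>1/n\<^esub> = x\<^sup>2 + M\<^bsub>1/(n+1)\<^esub>\<^sup>2\<close>. The numerators of \<open>M\<^bsub>1/n\<^esub>\<close>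
  are therefore the polynomials defined by the linear recurrence
  \<open>P\<^bsub>n+2\<^esub> = (u + v + w) P\<^bsub>n+1\<^esub> - v w P\<^bsub>n\<^esub>\<close>, because these satisfy the Cassini-type identity
  \<open>P\<^bsub>n+2\<^esub> P\<^bsub>n\<^esub> = u v\<^sup>n w\<^bsup>n+1\<^esup> + P\<^bsub>n+1\<^esub>\<^sup>2\<close>. Reading the recurrence at \<open>u\<^sup>0\<close> and \<open>u\<^sup>1\<close>
  gives \<open>S\<^sub>0 = v\<^sup>n\<close> and \<open>S\<^sub>1(n+1) = w S\<^sub>1(n) + (n+1) v\<^sup>n\<close>. Taking \<open>a/b = 0/1\<close>,
  \<open>c/d = 1/(n-1)\<close> shows \<open>P\<^bsub>2/(2n-1)\<^esub> = v w P\<^bsub>1/(n-1)\<^esub>\<^sup>2 + P\<^bsub>1/n\<^esub>\<^sup>2\<close>, whose linear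
  coefficient in \<open>u\<close> follows. Numerators are unique because a polynomial is determined by
  its values on positive reals.\<close>

lemma eval3_eq_poly_poly_poly: "eval3 P u v w = poly (poly (poly P [:[:u:]:]) [:v:]) w"
proof -
  have inner: "poly (map_poly (\<lambda>r. poly r w) q) v = poly (poly q [:v:]) w" for q :: "real poly poly"
    by (induction q) (simp_all add: map_poly_pCons)
  show ?thesis
    unfolding eval3_def inner
    by (induction P) (simp_all add: map_poly_pCons)
qed

lemma poly_eq_0_if_vanishes_on_pos:
  fixes p :: "real poly"
  assumes "\<And>x. x > 0 \<Longrightarrow> poly p x = 0"
  shows "p = 0"
proof (rule ccontr)
  assume "p \<noteq> 0"
  then have "finite {x. poly p x = 0}" by (rule poly_roots_finite)
  moreover have "{0<..} \<subseteq> {x. poly p x = 0}" using assms by auto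
  ultimately show False using infinite_Ioi finite_subset by blast
qed

lemma eval3_eq_0_if_vanishes_on_pos:
  assumes "\<And>u v w. u > 0 \<Longrightarrow> v > 0 \<Longrightarrow> w > 0 \<Longrightarrow> eval3 P u v w = 0"
  shows "P = 0"
proof (rule poly_eqI, rule poly_eqI)
  fix i j
  have "map_poly (\<lambda>q. poly (map_poly (\<lambda>r. poly r w) q) v) P = 0" if "v > 0" "w > 0" for v w
    using assms that unfolding eval3_def by (intro poly_eq_0_if_vanishes_on_pos) auto
  then have "coeff (map_poly (\<lambda>q. poly (map_poly (\<lambda>r. poly r w) q) v) P) i = 0"
    if "v > 0" "w > 0" for v w
    using that by simp
  then have "poly (map_poly (\<lambda>r. poly r w) (coeff P i)) v = 0" if "v > 0" "w > 0" for v w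
    using that by (simp add: coeff_map_poly)
  then have "map_poly (\<lambda>r. poly r w) (coeff P i) = 0" if "w > 0" for w
    using that by (intro poly_eq_0_if_vanishes_on_pos) auto
  then have "coeff (map_poly (\<lambda>r. poly r w) (coeff P i)) j = 0" if "w > 0" for w
    using that by simp
  then have "poly (coeff (coeff P i) j) w = 0" if "w > 0" for w
    using that by (simp add: coeff_map_poly)
  then show "coeff (coeff P i) j = coeff (coeff 0 i) j"
    using poly_eq_0_if_vanishes_on_pos by auto
qed

lemma eval3_eq_on_pos_imp_eq:
  assumes "\<And>u v w. u > 0 \<Longrightarrow> v > 0 \<Longrightarrow> w > 0 \<Longrightarrow> eval3 P u v w = eval3 Q u v w"
  shows "P = Q"
  using eval3_eq_0_if_vanishes_on_pos[of "P - Q"] assms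
  by (simp add: eval3_eq_poly_poly_poly)

lemma is_numerator_unique:
  assumes "is_numerator M a b P" "is_numerator M a b Q"
  shows "P = Q"
proof (rule eval3_eq_on_pos_imp_eq)
  fix u v w :: real
  assume "u > 0" "v > 0" "w > 0"
  then have pos: "sqrt u > 0" "sqrt v > 0" "sqrt w > 0" and sq: "sqrt u ^ 2 = u" "sqrt v ^ 2 = v" "sqrt w ^ 2 = w"
    by simp_all
  then have "sqrt u ^ (a - 1) * sqrt v ^ (b - 1) * sqrt w ^ (a + b - 1) \<noteq> 0" by simp
  with assms pos show "eval3 P u v w = eval3 Q u v w"
    unfolding is_numerator_def by (metis sq divide_cancel_right)
qed

definition v_poly :: "real poly poly" where
  "v_poly = monom 1 1"

definition w_poly :: "real poly poly" where
  "w_poly = monom (monom 1 1) 0"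

text \<open>\<open>P1 n\<close> is the numerator \<open>P\<^bsub>1/n\<^esub>\<close>; the value \<open>P1 0 = 1\<close> makes
  \<open>M\<^bsub>1/n\<^esub> = y P1 n (x\<^sup>2, y\<^sup>2, z\<^sup>2) / (y z)\<^sup>n\<close> hold for \<open>n = 0\<close> as well.\<close>

fun P1 :: "nat \<Rightarrow> real poly poly poly" where
  "P1 0 = 1"
| "P1 (Suc 0) = [:v_poly, 1:]"
| "P1 (Suc (Suc n)) =
     pCons 0 (P1 (Suc n)) + smult (v_poly + w_poly) (P1 (Suc n)) - smult (v_poly * w_poly) (P1 n)"

definition S1 :: "nat \<Rightarrow> real poly poly" where
  "S1 n = (\<Sum>k=1..n. monom (monom (of_nat k) (n - k)) (k - 1))"

lemma w_poly_mult_monom: "w_poly * monom (monom c a) b = monom (monom c (Suc a)) b"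
  by (simp add: w_poly_def mult_monom)

lemma S1_Suc: "S1 (Suc n) = w_poly * S1 n + of_nat (Suc n) * v_poly ^ n"
proof -
  have "S1 (Suc n) = (\<Sum>k=1..n. monom (monom (of_nat k) (Suc n - k)) (k - 1))
           + monom (monom (of_nat (Suc n)) 0) n"
    unfolding S1_def by simp
  also have "(\<Sum>k=1..n. monom (monom (of_nat k) (Suc n - k)) (k - 1)) = w_poly * S1 n"
    unfolding S1_def sum_distrib_left
    by (rule sum.cong) (auto simp: w_poly_mult_monom Suc_diff_le)
  also have "monom (monom (of_nat (Suc n)) 0) n = of_nat (Suc n) * v_poly ^ n"
    by (simp add: v_poly_def monom_power of_nat_poly mult_monom flip: monom_0)
  finally show ?thesis .
qed

lemma coeff_mult_1: "coeff (p * q) 1 = coeff p 0 * coeff q 1 + coeff p 1 * coeff q 0"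
  by (simp add: coeff_mult)

lemma coeff_power2_1: "coeff (p\<^sup>2) 1 = 2 * coeff p 0 * coeff (p :: 'a::comm_semiring_1 poly) 1"
  unfolding power2_eq_square coeff_mult_1 by (simp add: mult_2 algebra_simps)

lemma coeff_P1_0: "coeff (P1 n) 0 = v_poly ^ n"
  by (induction n rule: P1.induct) (simp_all add: algebra_simps)

lemma coeff_P1_1: "coeff (P1 n) 1 = S1 n"
proof (induction n rule: P1.induct)
  case (3 n)
  then show ?case
    by (simp add: S1_Suc coeff_P1_0 algebra_simps)
qed (simp_all add: S1_def)

declare P1.simps [simp del]

lemma eval3_P1_0 [simp]: "eval3 (P1 0) u v w = 1"
  by (simp add: eval3_eq_poly_poly_poly P1.simps)

lemma eval3_P1_1 [simp]: "eval3 (P1 (Suc 0)) u v w = u + v"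
  by (simp add: eval3_eq_poly_poly_poly P1.simps v_poly_def poly_monom)

lemma eval3_P1_Suc_Suc:
  "eval3 (P1 (Suc (Suc n))) u v w = (u + v + w) * eval3 (P1 (Suc n)) u v w - v * w * eval3 (P1 n) u v w"
  by (simp add: eval3_eq_poly_poly_poly P1.simps v_poly_def w_poly_def poly_monom algebra_simps)

lemma eval3_P1_Cassini:
  "eval3 (P1 (Suc (Suc n))) u v w * eval3 (P1 n) u v w
     = u * v ^ n * w ^ Suc n + (eval3 (P1 (Suc n)) u v w)\<^sup>2"
proof (induction n)
  case 0
  then show ?case by (simp add: eval3_P1_Suc_Suc power2_eq_square algebra_simps)
next
  case (Suc n)
  define e0 e1 e2 where "e0 = eval3 (P1 n) u v w" and "e1 = eval3 (P1 (Suc n)) u v w"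
    and "e2 = eval3 (P1 (Suc (Suc n))) u v w"
  have e2: "e2 = (u + v + w) * e1 - v * w * e0"
    unfolding e0_def e1_def e2_def by (rule eval3_P1_Suc_Suc)
  have "eval3 (P1 (Suc (Suc (Suc n)))) u v w * e1 - e2\<^sup>2 = v * w * (e2 * e0 - e1\<^sup>2)"
    unfolding eval3_P1_Suc_Suc[of "Suc n"] e2_def[symmetric] e1_def[symmetric]
    unfolding e2 by (simp add: power2_eq_square algebra_simps)
  with Suc show ?case
    unfolding e0_def e1_def e2_def by (simp add: algebra_simps)
qed

lemma eval3_P1_pos:
  assumes "u > 0" "v > 0" "w > 0"
  shows "eval3 (P1 n) u v w > 0"
proof -
  have "eval3 (P1 n) u v w > 0 \<and> eval3 (P1 (Suc n)) u v w > 0"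
  proof (induction n)
    case (Suc n)
    then have "eval3 (P1 (Suc (Suc n))) u v w * eval3 (P1 n) u v w > 0"
      using assms by (simp add: eval3_P1_Cassini add_pos_pos)
    with Suc show ?case by (simp add: zero_less_mult_iff)
  qed (use assms in simp)
  then show ?thesis ..
qed

lemma is_markov_family_initial:
  assumes "is_markov_family M" "x > 0" "y > 0" "z > 0"
  shows "M 1 0 x y z = y" "M 0 1 x y z = x" "M 1 1 x y z = (x\<^sup>2 + y\<^sup>2) / z"
  using assms unfolding is_markov_family_def by blast+

lemma is_markov_family_step:
  assumes "is_markov_family M" "markov_idx a b" "markov_idx c d"
    "\<bar>int a * int d - int b * int c\<bar> = 1" "a + 2 * c \<le> b + 2 * d" "x > 0" "y > 0" "z > 0"
  shows "M (a + 2 * c) (b + 2 * d) x y z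
           = ((M c d x y z)\<^sup>2 + (M (a + c) (b + d) x y z)\<^sup>2) / M a b x y z"
  using assms unfolding is_markov_family_def by blast

lemma markov_family_one_over:
  assumes M: "is_markov_family M" and pos: "x > 0" "y > 0" "z > 0"
  shows "M 1 n x y z = y * eval3 (P1 n) (x\<^sup>2) (y\<^sup>2) (z\<^sup>2) / (y * z) ^ n"
proof (induction n rule: P1.induct)
  case 1
  then show ?case using is_markov_family_initial[OF M pos] by simp
next
  case 2
  then show ?case using is_markov_family_initial[OF M pos] pos by simp
next
  case (3 n)
  let ?E = "\<lambda>n. eval3 (P1 n) (x\<^sup>2) (y\<^sup>2) (z\<^sup>2)"
  have "M (1 + 2 * 0) (n + 2 * 1) x y z
      = ((M 0 1 x y z)\<^sup>2 + (M (1 + 0) (n + 1) x y z)\<^sup>2) / M 1 n x y z"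
    by (rule is_markov_family_step[OF M _ _ _ _ pos]) (auto simp: markov_idx_def)
  then have rec: "M 1 (Suc (Suc n)) x y z = (x\<^sup>2 + (M 1 (Suc n) x y z)\<^sup>2) / M 1 n x y z"
    using is_markov_family_initial[OF M pos] by simp
  have cassini: "?E (Suc (Suc n)) * ?E n = x\<^sup>2 * (y\<^sup>2) ^ n * (z\<^sup>2) ^ Suc n + (?E (Suc n))\<^sup>2"
    by (rule eval3_P1_Cassini)
  have "?E n > 0" using pos by (simp add: eval3_P1_pos)
  with pos cassini show ?case
    unfolding rec 3
    by (simp add: field_simps power2_eq_square power_mult_distrib)
qed

lemma is_numerator_P1:
  assumes M: "is_markov_family M" and "n \<ge> 1"
  shows "is_numerator M 1 n (P1 n)"
  unfolding is_numerator_def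
proof (intro allI impI)
  fix x y z :: real
  assume pos: "x > 0" "y > 0" "z > 0"
  obtain m where n: "n = Suc m" using \<open>n \<ge> 1\<close> by (cases n) auto
  show "M 1 n x y z = eval3 (P1 n) (x\<^sup>2) (y\<^sup>2) (z\<^sup>2) / (x ^ (1 - 1) * y ^ (n - 1) * z ^ (1 + n - 1))"
    using pos unfolding markov_family_one_over[OF M pos] n by (simp add: power_mult_distrib)
qed

definition P2 :: "nat \<Rightarrow> real poly poly poly" where
  "P2 n = smult (v_poly * w_poly) ((P1 (n - 1))\<^sup>2) + (P1 n)\<^sup>2"

lemma eval3_P2:
  "eval3 (P2 n) u v w = v * w * (eval3 (P1 (n - 1)) u v w)\<^sup>2 + (eval3 (P1 n) u v w)\<^sup>2"
  by (simp add: P2_def eval3_eq_poly_poly_poly v_poly_def w_poly_def poly_monom)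

lemma is_numerator_P2:
  assumes M: "is_markov_family M" and "n \<ge> 2"
  shows "is_numerator M 2 (2 * n - 1) (P2 n)"
  unfolding is_numerator_def
proof (intro allI impI)
  fix x y z :: real
  assume pos: "x > 0" "y > 0" "z > 0"
  obtain m where n: "n = Suc (Suc m)" using \<open>n \<ge> 2\<close> by (metis add_2_eq_Suc le_Suc_ex)
  have "M (0 + 2 * 1) (1 + 2 * Suc m) x y z
      = ((M 1 (Suc m) x y z)\<^sup>2 + (M (0 + 1) (1 + Suc m) x y z)\<^sup>2) / M 0 1 x y z"
    by (rule is_markov_family_step[OF M _ _ _ _ pos]) (auto simp: markov_idx_def)
  then have "M 2 (2 * n - 1) x y z = ((M 1 (Suc m) x y z)\<^sup>2 + (M 1 n x y z)\<^sup>2) / x"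
    using is_markov_family_initial[OF M pos] by (simp add: n numeral_2_eq_2)
  with pos show "M 2 (2 * n - 1) x y z
      = eval3 (P2 n) (x\<^sup>2) (y\<^sup>2) (z\<^sup>2) / (x ^ (2 - 1) * y ^ (2 * n - 1 - 1) * z ^ (2 + (2 * n - 1) - 1))"
    unfolding markov_family_one_over[OF M pos] eval3_P2
    by (simp add: n field_simps power2_eq_square mult_2_right power_add)
qed

lemma sum_monom_eq_v_poly_pow_w_poly_S1:
  "(\<Sum>k=1..m. monom (monom (of_nat (4 * k)) (Suc m - k)) (Suc m + k - 1))
     = 4 * v_poly ^ Suc m * (w_poly * S1 m)"
  unfolding S1_def sum_distrib_left
proof (rule sum.cong)
  fix k assume k: "k \<in> {1..m}"
  have "4 * v_poly ^ Suc m = monom (monom 4 0) (Suc m)"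
    by (simp add: v_poly_def monom_power numeral_poly mult_monom flip: monom_0)
  with k show "monom (monom (of_nat (4 * k)) (Suc m - k)) (Suc m + k - 1)
      = 4 * v_poly ^ Suc m * (w_poly * monom (monom (of_nat k) (m - k)) (k - 1))"
    by (simp add: w_poly_mult_monom mult_monom Suc_diff_le)
qed simp

lemma coeff_P2_1:
  assumes "n \<ge> 2"
  shows "coeff (P2 n) 1 = monom [:of_nat (2 * n):] (2 * n - 1)
           + (\<Sum>k=1..n-1. monom (monom (of_nat (4 * k)) (n - k)) (n + k - 1))"
proof -
  obtain m where n: "n = Suc m" using assms by (cases n) auto
  have "coeff (P2 n) 1 = v_poly * w_poly * (2 * v_poly ^ m * S1 m) + 2 * v_poly ^ Suc m * S1 (Suc m)"
    unfolding P2_def coeff_add coeff_smult coeff_power2_1 coeff_P1_0 coeff_P1_1 n by simp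
  also have "\<dots> = of_nat (2 * n) * v_poly ^ (2 * n - 1) + 4 * v_poly ^ Suc m * (w_poly * S1 m)"
  proof -
    have pow: "v_poly ^ (2 * n - 1) = v_poly ^ Suc m * v_poly ^ m"
      unfolding n power_add[symmetric] by (simp add: mult_2)
    show ?thesis
      unfolding pow S1_Suc unfolding n by (simp add: algebra_simps)
  qed
  also have "of_nat (2 * n) * v_poly ^ (2 * n - 1) = monom [:of_nat (2 * n):] (2 * n - 1)"
    by (simp add: v_poly_def monom_power of_nat_poly mult_monom flip: monom_0)
  finally show ?thesis
    using sum_monom_eq_v_poly_pow_w_poly_S1[of m] by (simp only: n diff_Suc_1)
qed

theorem theorem4p3:
  fixes M :: "nat \<Rightarrow> nat \<Rightarrow> real \<Rightarrow> real \<Rightarrow> real \<Rightarrow> real"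
  assumes "is_markov_family M"
  shows "(\<forall>n::nat. \<forall>P. n \<ge> 1 \<longrightarrow> is_numerator M 1 n P \<longrightarrow>
            coeff P 1 = (\<Sum>k=1..n. monom (monom (of_nat k) (n - k)) (k - 1)))
       \<and> (\<forall>n::nat. \<forall>P. n \<ge> 2 \<longrightarrow> is_numerator M 2 (2*n - 1) P \<longrightarrow>
            coeff P 1 = monom [:of_nat (2*n):] (2*n - 1)
                        + (\<Sum>k=1..n-1. monom (monom (of_nat (4*k)) (n - k)) (n + k - 1)))"
proof (intro conjI allI impI)
  fix n :: nat and P
  assume "n \<ge> 1" "is_numerator M 1 n P"
  then have "P = P1 n" using is_numerator_P1[OF assms] is_numerator_unique by blast
  then show "coeff P 1 = (\<Sum>k=1..n. monom (monom (of_nat k) (n - k)) (k - 1))"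
    by (simp only: coeff_P1_1 S1_def)
next
  fix n :: nat and P
  assume "n \<ge> 2" "is_numerator M 2 (2*n - 1) P"
  then have "P = P2 n" using is_numerator_P2[OF assms] is_numerator_unique by blast
  then show "coeff P 1 = monom [:of_nat (2*n):] (2*n - 1)
      + (\<Sum>k=1..n-1. monom (monom (of_nat (4*k)) (n - k)) (n + k - 1))"
    using coeff_P2_1[OF \<open>n \<ge> 2\<close>] by simp
qed

end
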